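(* Assume $A$ is good and $(x,w_x)$ is an optimal pair. Then there exists $k\ge0$ such that $\sigma^k(w_x)\in M$ (the support of the maximizing probability of $A^*$), and for such $k$ the pair $\hat T^{-k}(x,w_x)$ is again an optimal pair, where $\hat T^{-1}(x,w)=(\tau_wx,\sigma w)$.
   Context: $\Sigma=\{0,1\}^{\mathbb N}$; $T$ and $\sigma$ denote the shift acting on points $x$ and $w$ respectively; $\tau_w(x)=(w_0,x_0,x_1,\dots)$. $A$ is Hölder with involution kernel $W(w,x)$ and dual potential $A^*$: $A^*(w)=A(\tau_wx)+W(\sigma w,\tau_wx)-W(w,x)$; normalize $m(A)=m(A^* )=0$. $V,V^*$ are calibrated subactions for $A,A^*$; $R^*(w)=V^*(\sigma w)-V^*(w)-A^*(w)\ge0$, $I^*(w)=\sum_{n\ge0}R^*(\sigma^nw)$. It is known that, after adding a constant to $W$, $V(x)=\sup_w[W(w,x)-V^*(w)-I^*(w)]$; $b(x,w)=V(x)+V^*(w)+I^*(w)-W(w,x)\ge 0$ and $(x,w)$ is optimal iff $b(x,w)=0$. Assume the maximizing probability of $A^*$ is unique and supported on a periodic orbit $M$; $P=\{w\notin M:\sigma w\in M\}$; $A$ is good if $R^*>0$ on $P$. *)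

theory Defs
  imports "HOL-Probability.Probability"
begin

type_synonym seq = "nat \<Rightarrow> bool"

text \<open>The shift (denoted T on points x and sigma on points w).\<close>
definition shift :: "seq \<Rightarrow> seq" where
  "shift x = (\<lambda>n. x (Suc n))"

definition tau :: "seq \<Rightarrow> seq \<Rightarrow> seq" where
  "tau w x = (\<lambda>n. case n of 0 \<Rightarrow> w 0 | Suc m \<Rightarrow> x m)"

definition sdist :: "seq \<Rightarrow> seq \<Rightarrow> real" where
  "sdist x y = (if x = y then 0 else (1/2) ^ (LEAST n. x n \<noteq> y n))"

definition holder :: "(seq \<Rightarrow> real) \<Rightarrow> bool" where
  "holder f \<longleftrightarrow> (\<exists>C \<alpha>. C \<ge> 0 \<and> \<alpha> > 0 \<and>
      (\<forall>x y. \<bar>f x - f y\<bar> \<le> C * sdist x y powr \<alpha>))"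

definition cont_seq :: "(seq \<Rightarrow> real) \<Rightarrow> bool" where
  "cont_seq f \<longleftrightarrow> (\<forall>x \<epsilon>. \<epsilon> > 0 \<longrightarrow>
      (\<exists>\<delta>>0. \<forall>y. sdist x y < \<delta> \<longrightarrow> \<bar>f y - f x\<bar> < \<epsilon>))"

definition cont_seq2 :: "(seq \<Rightarrow> seq \<Rightarrow> real) \<Rightarrow> bool" where
  "cont_seq2 f \<longleftrightarrow> (\<forall>w x \<epsilon>. \<epsilon> > 0 \<longrightarrow>
      (\<exists>\<delta>>0. \<forall>w' x'. sdist w w' < \<delta> \<and> sdist x x' < \<delta> \<longrightarrow> \<bar>f w' x' - f w x\<bar> < \<epsilon>))"

text \<open>Borel (= cylinder) sigma algebra on Sigma.\<close>
definition SigmaM :: "seq measure" where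
  "SigmaM = Pi\<^sub>M UNIV (\<lambda>_. count_space UNIV)"

definition invariant_prob :: "seq measure \<Rightarrow> bool" where
  "invariant_prob \<mu> \<longleftrightarrow> sets \<mu> = sets SigmaM \<and> prob_space \<mu> \<and>
      shift \<in> measurable \<mu> \<mu> \<and> distr \<mu> \<mu> shift = \<mu>"

definition mval :: "(seq \<Rightarrow> real) \<Rightarrow> real" where
  "mval f = (SUP \<mu> \<in> {\<mu>. invariant_prob \<mu>}. integral\<^sup>L \<mu> f)"

definition maximizing :: "(seq \<Rightarrow> real) \<Rightarrow> seq measure \<Rightarrow> bool" where
  "maximizing f \<mu> \<longleftrightarrow> invariant_prob \<mu> \<and> integral\<^sup>L \<mu> f = mval f"

definition periodic_orbit :: "seq set \<Rightarrow> bool" where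
  "periodic_orbit M \<longleftrightarrow> (\<exists>p n. n > 0 \<and> (shift ^^ n) p = p \<and>
      M = {(shift ^^ i) p | i. i < n})"

definition calibrated_subaction :: "(seq \<Rightarrow> real) \<Rightarrow> (seq \<Rightarrow> real) \<Rightarrow> bool" where
  "calibrated_subaction f V \<longleftrightarrow>
     (\<forall>x. V (shift x) \<ge> V x + f x) \<and> (\<forall>y. \<exists>x. shift x = y \<and> V y = V x + f x)"

definition R_star :: "(seq \<Rightarrow> real) \<Rightarrow> (seq \<Rightarrow> real) \<Rightarrow> seq \<Rightarrow> real" where
  "R_star Vs As w = Vs (shift w) - Vs w - As w"

definition I_star :: "(seq \<Rightarrow> real) \<Rightarrow> (seq \<Rightarrow> real) \<Rightarrow> seq \<Rightarrow> ereal" where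
  "I_star Vs As w = (\<Sum>n. ereal (R_star Vs As ((shift ^^ n) w)))"

definition b_fun :: "(seq \<Rightarrow> real) \<Rightarrow> (seq \<Rightarrow> real) \<Rightarrow> (seq \<Rightarrow> real)
    \<Rightarrow> (seq \<Rightarrow> seq \<Rightarrow> real) \<Rightarrow> seq \<Rightarrow> seq \<Rightarrow> ereal" where
  "b_fun V Vs As W x w = ereal (V x + Vs w - W w x) + I_star Vs As w"

definition optimal_pair :: "(seq \<Rightarrow> real) \<Rightarrow> (seq \<Rightarrow> real) \<Rightarrow> (seq \<Rightarrow> real)
    \<Rightarrow> (seq \<Rightarrow> seq \<Rightarrow> real) \<Rightarrow> seq \<Rightarrow> seq \<Rightarrow> bool" where
  "optimal_pair V Vs As W x w \<longleftrightarrow> b_fun V Vs As W x w = 0"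

definition hatTinv :: "seq \<times> seq \<Rightarrow> seq \<times> seq" where
  "hatTinv p = (tau (snd p) (fst p), shift (snd p))"

end

(* If (x, w) is optimal then I*(w) is finite, so R* tends to 0 along the forward orbit of w.
   This orbit cannot stay away from M for ever: a limit point of its visit frequencies is an
   invariant probability that does not charge the cylinders the orbit eventually avoids, in
   particular a neighbourhood of M; since A* = V* o sigma - V* - R*, that measure has R* = 0
   almost everywhere and integrates A* to its maximal value 0, so it is maximizing and lives on M.
   Coming close to M from far away forces the orbit near a point of the finite set P, where R* is
   bounded below because A is good; as R* tends to 0 this happens only finitely often. Hence the
   orbit eventually shadows M, and since M is periodic it then lands on M.
   Optimality is preserved by hat T^-1: the kernel identity turns b(tau_w x, sigma w) into
   V(tau_w x) + A(tau_w x) - V(x), which is <= 0 because V is a subaction. *)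

theory Submission
  imports Defs "HOL-Library.Diagonal_Subsequence"
begin

lemma shift_tau [simp]: "shift (tau w x) = x"
  unfolding tau_def shift_def by simp

lemma tau_head_shift: "tau (\<lambda>_. z 0) (shift z) = z"
  unfolding tau_def shift_def by (auto split: nat.splits)

lemma tau_cong_head: "w 0 = w' 0 \<Longrightarrow> tau w y = tau w' y"
  unfolding tau_def by (auto split: nat.splits)

lemma funpow_shift_apply: "(shift ^^ n) x i = x (i + n)"
  by (induction n arbitrary: i) (auto simp: shift_def)

lemma R_star_nonneg: "calibrated_subaction As Vs \<Longrightarrow> 0 \<le> R_star Vs As w"
  unfolding calibrated_subaction_def R_star_def by (smt (verit))

lemma R_star_orbit_sums:
  assumes cal: "calibrated_subaction As Vs" and fin: "I_star Vs As w = ereal c"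
  shows "(\<lambda>n. R_star Vs As ((shift ^^ n) w)) sums c"
proof -
  have "(\<lambda>n. ereal (R_star Vs As ((shift ^^ n) w))) sums I_star Vs As w"
    unfolding I_star_def by (intro summable_sums summable_ereal_pos) (simp add: R_star_nonneg[OF cal])
  then show ?thesis using fin by (simp add: sums_ereal)
qed

lemma I_star_nonneg: "calibrated_subaction As Vs \<Longrightarrow> 0 \<le> I_star Vs As w"
  unfolding I_star_def by (simp add: R_star_nonneg suminf_nonneg summable_ereal_pos)

lemma b_fun_nonneg:
  assumes cal: "calibrated_subaction As Vs"
    and V_sup: "\<And>y. ereal (V y) = (SUP w. ereal (W w y - Vs w) - I_star Vs As w)"
  shows "0 \<le> b_fun V Vs As W y w"
proof -
  have le: "ereal (W w y - Vs w) - I_star Vs As w \<le> ereal (V y)"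
    unfolding V_sup by (rule SUP_upper) simp
  show ?thesis
    using le I_star_nonneg[OF cal, of w] unfolding b_fun_def
    by (cases "I_star Vs As w") auto
qed

lemma optimal_pair_I_star:
  assumes "optimal_pair V Vs As W x w"
  shows "I_star Vs As w = ereal (W w x - V x - Vs w)"
  using assms unfolding optimal_pair_def b_fun_def
  by (cases "I_star Vs As w") auto

lemma optimal_pair_tau_shift:
  assumes cal: "calibrated_subaction As Vs"
    and V_cal: "calibrated_subaction A V"
    and kernel: "\<And>w y. As w = A (tau w y) + W (shift w) (tau w y) - W w y"
    and V_sup: "\<And>y. ereal (V y) = (SUP w. ereal (W w y - Vs w) - I_star Vs As w)"
    and opt: "optimal_pair V Vs As W x w"
  shows "optimal_pair V Vs As W (tau w x) (shift w)"
proof -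
  let ?R = "\<lambda>n. R_star Vs As ((shift ^^ n) w)"
  define c where "c = W w x - V x - Vs w"
  have "?R sums c"
    using R_star_orbit_sums[OF cal optimal_pair_I_star[OF opt]] unfolding c_def .
  then have "(\<lambda>n. ?R (Suc n)) sums (c - ?R 0)"
    using sums_Suc_iff[of ?R "c - ?R 0"] by simp
  then have I_shift: "I_star Vs As (shift w) = ereal (c - ?R 0)"
    unfolding I_star_def by (simp add: funpow_swap1 flip: sums_ereal) (metis sums_unique)
  have V_step: "V (tau w x) + A (tau w x) \<le> V x"
    using V_cal shift_tau[of w x] unfolding calibrated_subaction_def by metis
  \<comment> \<open>the kernel identity makes b at the new pair equal to V(tau w x) + A(tau w x) - V x\<close>
  have "b_fun V Vs As W (tau w x) (shift w) \<le> 0"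
    using V_step kernel[of w x] unfolding b_fun_def I_shift c_def by (simp add: R_star_def)
  with b_fun_nonneg[OF cal V_sup] show ?thesis
    unfolding optimal_pair_def by (meson order.antisym)
qed

lemma optimal_pair_hatTinv_funpow:
  assumes cal: "calibrated_subaction As Vs"
    and V_cal: "calibrated_subaction A V"
    and kernel: "\<And>w y. As w = A (tau w y) + W (shift w) (tau w y) - W w y"
    and V_sup: "\<And>y. ereal (V y) = (SUP w. ereal (W w y - Vs w) - I_star Vs As w)"
    and opt: "optimal_pair V Vs As W x w"
  shows "optimal_pair V Vs As W (fst ((hatTinv ^^ k) (x, w))) (snd ((hatTinv ^^ k) (x, w)))"
proof (induction k)
  case 0
  then show ?case using opt by simp
next
  case (Suc k)
  then show ?case
    using optimal_pair_tau_shift[OF cal V_cal kernel V_sup] by (simp add: hatTinv_def)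
qed

subsection \<open>Continuity in terms of cylinders\<close>

definition agree_upto :: "nat \<Rightarrow> seq \<Rightarrow> seq \<Rightarrow> bool" where
  "agree_upto n x y \<longleftrightarrow> (\<forall>i<n. x i = y i)"

definition cyl_continuous :: "(seq \<Rightarrow> real) \<Rightarrow> bool" where
  "cyl_continuous f \<longleftrightarrow>
     (\<forall>x \<epsilon>. \<epsilon> > 0 \<longrightarrow> (\<exists>n. \<forall>y. agree_upto n x y \<longrightarrow> \<bar>f y - f x\<bar> < \<epsilon>))"

lemma cyl_continuousD:
  "cyl_continuous f \<Longrightarrow> 0 < \<epsilon> \<Longrightarrow> \<exists>n. \<forall>y. agree_upto n x y \<longrightarrow> \<bar>f y - f x\<bar> < \<epsilon>"
  unfolding cyl_continuous_def by blast

lemma agree_upto_sym: "agree_upto n x y \<longleftrightarrow> agree_upto n y x"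
  unfolding agree_upto_def by auto

lemma agree_upto_trans: "agree_upto n x y \<Longrightarrow> agree_upto n y z \<Longrightarrow> agree_upto n x z"
  unfolding agree_upto_def by auto

lemma agree_upto_mono: "agree_upto n x y \<Longrightarrow> m \<le> n \<Longrightarrow> agree_upto m x y"
  unfolding agree_upto_def by auto

lemma agree_upto_shift: "agree_upto (Suc n) x y \<Longrightarrow> agree_upto n (shift x) (shift y)"
  unfolding agree_upto_def shift_def by auto

lemma sdist_le_if_agree_upto: "agree_upto n x y \<Longrightarrow> sdist x y \<le> (1/2) ^ n"
proof (cases "x = y")
  case False
  assume agree: "agree_upto n x y"
  obtain i where "x i \<noteq> y i" using False by auto
  then have "x (LEAST i. x i \<noteq> y i) \<noteq> y (LEAST i. x i \<noteq> y i)" by (rule LeastI)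
  with agree have "n \<le> (LEAST i. x i \<noteq> y i)"
    unfolding agree_upto_def by (meson not_less)
  then show ?thesis using False unfolding sdist_def by (simp add: power_decreasing)
qed (simp add: sdist_def)

lemma agree_upto_imp_sdist_less:
  assumes "\<delta> > 0" obtains n where "\<And>x y. agree_upto n x y \<Longrightarrow> sdist x y < \<delta>"
proof -
  obtain n where "(1/2::real) ^ n < \<delta>" using real_arch_pow_inv[OF assms, of "1/2"] by auto
  then show thesis using that sdist_le_if_agree_upto by (meson le_less_trans)
qed

lemma cont_seq_imp_cyl_continuous: "cont_seq f \<Longrightarrow> cyl_continuous f"
  unfolding cont_seq_def cyl_continuous_def by (metis agree_upto_imp_sdist_less)

lemma cont_seq2_agree_upto:
  assumes "cont_seq2 W" "\<epsilon> > 0"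
  obtains n where "\<And>w' x'. agree_upto n w w' \<Longrightarrow> agree_upto n x x' \<Longrightarrow> \<bar>W w' x' - W w x\<bar> < \<epsilon>"
proof -
  obtain \<delta> where "\<delta> > 0"
    and \<delta>: "\<And>w' x'. sdist w w' < \<delta> \<Longrightarrow> sdist x x' < \<delta> \<Longrightarrow> \<bar>W w' x' - W w x\<bar> < \<epsilon>"
    using assms unfolding cont_seq2_def by blast
  then show thesis using that agree_upto_imp_sdist_less[OF \<open>\<delta> > 0\<close>] by metis
qed

lemma cyl_continuous_diff:
  assumes f: "cyl_continuous f" and g: "cyl_continuous g"
  shows "cyl_continuous (\<lambda>x. f x - g x)"
  unfolding cyl_continuous_def
proof (intro allI impI)
  fix x and \<epsilon> :: real assume "\<epsilon> > 0"
  then obtain m n where m: "\<And>y. agree_upto m x y \<Longrightarrow> \<bar>f y - f x\<bar> < \<epsilon>/2"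
    and n: "\<And>y. agree_upto n x y \<Longrightarrow> \<bar>g y - g x\<bar> < \<epsilon>/2"
    using f g unfolding cyl_continuous_def by (meson half_gt_zero)
  have "\<bar>f y - g y - (f x - g x)\<bar> < \<epsilon>" if "agree_upto (max m n) x y" for y
  proof -
    have "\<bar>f y - f x\<bar> < \<epsilon>/2" "\<bar>g y - g x\<bar> < \<epsilon>/2"
      using m n agree_upto_mono[OF that] by auto
    then show ?thesis by linarith
  qed
  then show "\<exists>n. \<forall>y. agree_upto n x y \<longrightarrow> \<bar>f y - g y - (f x - g x)\<bar> < \<epsilon>" by blast
qed

lemma cyl_continuous_comp_shift: "cyl_continuous f \<Longrightarrow> cyl_continuous (\<lambda>x. f (shift x))"
  unfolding cyl_continuous_def by (meson agree_upto_shift)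

text \<open>Continuity of the dual potential follows from that of the kernel: in the kernel identity
  with a fixed y, the term A(tau w y) depends only on w 0.\<close>

lemma cyl_continuous_dual_potential:
  assumes W_cont: "cont_seq2 W"
    and kernel: "\<And>w y. As w = A (tau w y) + W (shift w) (tau w y) - W w y"
  shows "cyl_continuous As"
  unfolding cyl_continuous_def
proof (intro allI impI)
  fix w and \<epsilon> :: real assume "\<epsilon> > 0"
  define y :: seq where "y = (\<lambda>_. False)"
  obtain m where m: "\<And>w' x'. agree_upto m (shift w) w' \<Longrightarrow> agree_upto m (tau w y) x' \<Longrightarrow>
      \<bar>W w' x' - W (shift w) (tau w y)\<bar> < \<epsilon>/2"
    using cont_seq2_agree_upto[OF W_cont, of "\<epsilon>/2"] \<open>\<epsilon> > 0\<close> by auto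
  obtain n where n: "\<And>w' x'. agree_upto n w w' \<Longrightarrow> agree_upto n y x' \<Longrightarrow> \<bar>W w' x' - W w y\<bar> < \<epsilon>/2"
    using cont_seq2_agree_upto[OF W_cont, of "\<epsilon>/2"] \<open>\<epsilon> > 0\<close> by auto
  have "\<bar>As w' - As w\<bar> < \<epsilon>" if agree: "agree_upto (Suc (max m n)) w w'" for w'
  proof -
    have "tau w' y = tau w y"
      using agree unfolding agree_upto_def by (intro tau_cong_head) auto
    then have "As w' - As w = (W (shift w') (tau w y) - W (shift w) (tau w y)) - (W w' y - W w y)"
      using kernel[of w' y] kernel[of w y] by simp
    moreover have "agree_upto m (shift w) (shift w')"
      using agree_upto_shift agree_upto_mono[OF agree] by simp
    then have "\<bar>W (shift w') (tau w y) - W (shift w) (tau w y)\<bar> < \<epsilon>/2"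
      using m by (simp add: agree_upto_def)
    moreover have "agree_upto n w w'"
      using agree_upto_mono[OF agree] by simp
    then have "\<bar>W w' y - W w y\<bar> < \<epsilon>/2"
      using n by (simp add: agree_upto_def)
    ultimately show ?thesis by linarith
  qed
  then show "\<exists>n. \<forall>w'. agree_upto n w w' \<longrightarrow> \<bar>As w' - As w\<bar> < \<epsilon>" by blast
qed

lemma cyl_continuous_R_star:
  "cyl_continuous Vs \<Longrightarrow> cyl_continuous As \<Longrightarrow> cyl_continuous (R_star Vs As)"
  unfolding R_star_def
  by (intro cyl_continuous_diff cyl_continuous_comp_shift) (auto simp: fun_diff_def)

subsection \<open>Compactness of the shift space\<close>

lemma bounded_double_seq_diagonal:
  fixes E :: "nat \<Rightarrow> nat \<Rightarrow> real"
  assumes bdd: "\<And>N k. \<bar>E N k\<bar> \<le> B"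
  obtains r l where "strict_mono r" "\<And>k. (\<lambda>N. E (r N) k) \<longlonglongrightarrow> l k"
proof -
  let ?P = "\<lambda>k s. convergent (\<lambda>N. E (s N) k)"
  interpret subseqs ?P
  proof (unfold subseqs_def convergent_def, intro allI impI)
    fix k and s :: "nat \<Rightarrow> nat" assume "strict_mono s"
    have "\<And>N. E (s N) k \<in> {-B..B}" using bdd by (simp add: abs_le_iff minus_le_iff)
    then obtain l r where "strict_mono r" "((\<lambda>N. E (s N) k) \<circ> r) \<longlonglongrightarrow> l"
      using compact_Icc compact_imp_seq_compact seq_compactE by metis
    then show "\<exists>r. strict_mono r \<and> (\<exists>l. (\<lambda>N. E ((s \<circ> r) N) k) \<longlonglongrightarrow> l)"
      by (auto simp: comp_def)
  qed
  have "?P k diagseq" for k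
  proof -
    have "(\<lambda>N. E ((seqseq (Suc k) \<circ> (\<lambda>N. fold_reduce (Suc k) N (Suc k + N))) N) k) =
        (\<lambda>N. E (seqseq (Suc k) N) k) \<circ> (\<lambda>N. fold_reduce (Suc k) N (Suc k + N))"
      (is "_ = ?rest")
      by auto
    have "?P k (diagseq \<circ> (+) (Suc k))"
      unfolding diagseq_seqseq \<open>_ = ?rest\<close>
      by (intro convergent_subseq_convergent seqseq_holds subseq_diagonal_rest)
    then obtain l where "(\<lambda>N. E (diagseq (N + Suc k)) k) \<longlonglongrightarrow> l"
      by (auto simp: add.commute dest: convergentD)
    then have "(\<lambda>N. E (diagseq N) k) \<longlonglongrightarrow> l"
      by (rule LIMSEQ_offset)
    then show ?thesis
      by (auto simp: convergent_def)
  qed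
  then show thesis
    using that[of diagseq "\<lambda>k. lim (\<lambda>N. E (diagseq N) k)"] subseq_diagseq
    by (simp add: convergent_LIMSEQ_iff)
qed

lemma shift_space_seq_compact:
  fixes xs :: "nat \<Rightarrow> seq"
  obtains r z where "strict_mono r" "\<And>n. \<forall>\<^sub>F N in sequentially. agree_upto n (xs (r N)) z"
proof -
  define E where "E N k = (if xs N k then 1 else (0::real))" for N k
  have "\<bar>E N k\<bar> \<le> 1" for N k unfolding E_def by simp
  then obtain r l where r: "strict_mono r" and l: "\<And>k. (\<lambda>N. E (r N) k) \<longlonglongrightarrow> l k"
    using bounded_double_seq_diagonal[of E 1] by blast
  define z where "z k = (l k > 1/2)" for k
  have "\<forall>\<^sub>F N in sequentially. xs (r N) k = z k" for k
  proof -
    have "\<forall>\<^sub>F N in sequentially. dist (E (r N) k) (l k) < 1/4"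
      using tendstoD[OF l[of k], of "1/4"] by simp
    then show ?thesis
      by (rule eventually_mono) (auto simp: E_def z_def dist_real_def abs_if split: if_splits)
  qed
  then have "\<forall>\<^sub>F N in sequentially. \<forall>k\<in>{..<n}. xs (r N) k = z k" for n
    by (simp add: eventually_ball_finite)
  then have "\<forall>\<^sub>F N in sequentially. agree_upto n (xs (r N)) z" for n
    unfolding agree_upto_def by (rule eventually_mono) auto
  with r show thesis using that by blast
qed

lemma cyl_continuous_uniform:
  assumes f: "cyl_continuous f" and "\<epsilon> > 0"
  obtains n where "\<And>x y. agree_upto n x y \<Longrightarrow> \<bar>f x - f y\<bar> < \<epsilon>"
proof (rule ccontr)
  assume "\<not> thesis"
  then have "\<forall>n. \<exists>x y. agree_upto n x y \<and> \<epsilon> \<le> \<bar>f x - f y\<bar>"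
    using that by (meson not_less)
  then obtain xs ys where bad: "\<And>n. agree_upto n (xs n) (ys n) \<and> \<epsilon> \<le> \<bar>f (xs n) - f (ys n)\<bar>"
    by metis
  obtain r z where r: "strict_mono r" and conv: "\<And>n. \<forall>\<^sub>F N in sequentially. agree_upto n (xs (r N)) z"
    using shift_space_seq_compact by blast
  obtain n where n: "\<And>y. agree_upto n z y \<Longrightarrow> \<bar>f y - f z\<bar> < \<epsilon>/2"
    using f \<open>\<epsilon> > 0\<close> unfolding cyl_continuous_def by (meson half_gt_zero)
  obtain N0 where N0: "\<And>N. N0 \<le> N \<Longrightarrow> agree_upto n (xs (r N)) z"
    using conv[of n] unfolding eventually_sequentially by blast
  define N where "N = max N0 n"
  have N: "n \<le> N" "agree_upto n (xs (r N)) z"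
    using N0 unfolding N_def by auto
  have "agree_upto n (xs (r N)) (ys (r N))"
    using bad agree_upto_mono seq_suble[OF r, of N] N(1) by (meson order.trans)
  then have "agree_upto n z (xs (r N))" "agree_upto n z (ys (r N))"
    using N(2) agree_upto_sym agree_upto_trans by blast+
  then have "\<bar>f (xs (r N)) - f z\<bar> < \<epsilon>/2" "\<bar>f (ys (r N)) - f z\<bar> < \<epsilon>/2"
    using n by auto
  then have "\<bar>f (xs (r N)) - f (ys (r N))\<bar> < \<epsilon>"
    by linarith
  with bad show False by (meson not_less)
qed

definition extend_false :: "bool list \<Rightarrow> seq" where
  "extend_false s i \<longleftrightarrow> i < length s \<and> s ! i"

lemma agree_upto_extend_false: "agree_upto n x (extend_false (map x [0..<n]))"
  unfolding agree_upto_def extend_false_def by simp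

lemma cyl_continuous_bounded:
  assumes f: "cyl_continuous f"
  obtains B where "\<And>x. \<bar>f x\<bar> \<le> B"
proof -
  obtain n where n: "\<And>x y. agree_upto n x y \<Longrightarrow> \<bar>f x - f y\<bar> < 1"
    using cyl_continuous_uniform[OF f] by (meson zero_less_one)
  define B where "B = Max ((\<lambda>s. \<bar>f (extend_false s)\<bar>) ` {s. length s = n})"
  have "\<bar>f x\<bar> \<le> B + 1" for x
  proof -
    have "\<bar>f (extend_false (map x [0..<n]))\<bar> \<le> B"
      unfolding B_def using finite_lists_length_eq[of "UNIV :: bool set" n] by (intro Max_ge) auto
    moreover have "\<bar>f x - f (extend_false (map x [0..<n]))\<bar> < 1"
      using n agree_upto_extend_false by blast
    ultimately show ?thesis by linarith
  qed
  then show thesis by (rule that)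
qed

definition cylinder :: "bool list \<Rightarrow> seq set" where
  "cylinder s = {x. \<forall>i<length s. x i = s ! i}"

lemma space_SigmaM [simp]: "space SigmaM = UNIV"
  unfolding SigmaM_def by (simp add: space_PiM PiE_def extensional_def)

lemma map_eq_iff_cylinder: "map x [0..<n] = s \<longleftrightarrow> length s = n \<and> x \<in> cylinder s"
  unfolding cylinder_def by (auto simp: list_eq_iff_nth_eq)

lemma mem_cylinder_map [simp]: "x \<in> cylinder (map x [0..<n])"
  unfolding cylinder_def by simp

lemma cylinder_disjoint: "length s = length t \<Longrightarrow> s \<noteq> t \<Longrightarrow> cylinder s \<inter> cylinder t = {}"
  unfolding cylinder_def by (auto simp: list_eq_iff_nth_eq)

lemma measurable_component_SigmaM [measurable]:
  "(\<lambda>x. x i) \<in> measurable SigmaM (count_space UNIV)"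
  unfolding SigmaM_def by (rule measurable_component_singleton) simp

lemma sets_cylinder [measurable]: "cylinder s \<in> sets SigmaM"
proof (cases "s = []")
  case True
  then show ?thesis unfolding cylinder_def using sets.top[of SigmaM] by simp
next
  case False
  have "cylinder s = (\<Inter>i<length s. (\<lambda>x. x i) -` {s ! i})"
    unfolding cylinder_def by auto
  also have "\<dots> \<in> sets SigmaM"
    using False measurable_sets[OF measurable_component_SigmaM] by (intro sets.finite_INT) auto
  finally show ?thesis .
qed

lemma measurable_prefix:
  "(\<lambda>x. map x [0..<n]) \<in> measurable SigmaM (count_space UNIV)"
proof (subst measurable_count_space_eq_countable)
  have "(\<lambda>x. map x [0..<n]) -` {s} \<inter> space SigmaM = (if length s = n then cylinder s else {})"
    for s :: "bool list"
    using map_eq_iff_cylinder by auto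
  then show "(\<lambda>x. map x [0..<n]) \<in> space SigmaM \<rightarrow> UNIV \<and>
      (\<forall>s\<in>UNIV. (\<lambda>x. map x [0..<n]) -` {s} \<inter> space SigmaM \<in> sets SigmaM)"
    by simp
qed simp

lemma measurable_shift [measurable]: "shift \<in> measurable SigmaM SigmaM"
proof -
  have "(\<lambda>x i. x (Suc i)) \<in> measurable SigmaM (Pi\<^sub>M UNIV (\<lambda>_. count_space UNIV))"
    by (rule measurable_PiM_single') auto
  then show ?thesis unfolding shift_def[abs_def] by (simp add: SigmaM_def)
qed

lemma cyl_continuous_borel_measurable:
  assumes f: "cyl_continuous f"
  shows "f \<in> borel_measurable SigmaM"
proof (rule borel_measurable_LIMSEQ_real)
  show "(\<lambda>x. f (extend_false (map x [0..<n]))) \<in> borel_measurable SigmaM" for n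
    by (rule measurable_compose[OF measurable_prefix]) simp
  show "(\<lambda>n. f (extend_false (map x [0..<n]))) \<longlonglongrightarrow> f x" for x
  proof (rule LIMSEQ_I)
    fix r :: real assume "r > 0"
    then obtain n where n: "\<And>y. agree_upto n x y \<Longrightarrow> \<bar>f y - f x\<bar> < r"
      using f unfolding cyl_continuous_def by blast
    have "norm (f (extend_false (map x [0..<m])) - f x) < r" if "n \<le> m" for m
      using n agree_upto_mono[OF agree_upto_extend_false that] by simp
    then show "\<exists>n0. \<forall>m\<ge>n0. norm (f (extend_false (map x [0..<m])) - f x) < r"
      by blast
  qed
qed

lemma finite_bool_lists_length: "finite {s :: bool list. length s = n}"
  using finite_lists_length_eq[of "UNIV :: bool set" n] by simp

lemma mem_cylinder_Cons: "x \<in> cylinder (b # s) \<longleftrightarrow> x 0 = b \<and> shift x \<in> cylinder s"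
  unfolding cylinder_def shift_def by (auto simp: less_Suc_eq_0_disj)

lemma mem_cylinder_snoc: "x \<in> cylinder (s @ [b]) \<longleftrightarrow> x \<in> cylinder s \<and> x (length s) = b"
  unfolding cylinder_def by (auto simp: nth_append less_Suc_eq)

lemma measure_eqI_cylinder:
  assumes sP: "sets P = sets SigmaM" and sQ: "sets Q = sets SigmaM"
    and fin: "finite_measure P"
    and eq: "\<And>s. emeasure P (cylinder s) = emeasure Q (cylinder s)"
  shows "P = Q"
proof (rule measure_eqI_PiM_infinite[where I=UNIV and M="\<lambda>_. count_space UNIV"])
  show "sets P = sets (Pi\<^sub>M UNIV (\<lambda>_. count_space UNIV))" "sets Q = sets (Pi\<^sub>M UNIV (\<lambda>_. count_space UNIV))"
    using sP sQ by (simp_all add: SigmaM_def)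
  fix A :: "nat \<Rightarrow> bool set" and J :: "nat set" assume "finite J"
  define n where "n = Suc (Max (insert 0 J))"
  have J_less: "i \<in> J \<Longrightarrow> i < n" for i unfolding n_def using \<open>finite J\<close> by (simp add: le_imp_less_Suc)
  define S where "S = {s. length s = n \<and> (\<forall>i\<in>J. s ! i \<in> A i)}"
  have "finite S"
    using finite_bool_lists_length[of n] unfolding S_def by (rule rev_finite_subset) blast
  have "x \<in> prod_emb UNIV (\<lambda>_. count_space UNIV) J (Pi\<^sub>E J A) \<longleftrightarrow> x \<in> (\<Union>s\<in>S. cylinder s)" for x
  proof -
    have "x \<in> (\<Union>s\<in>S. cylinder s) \<longleftrightarrow> map x [0..<n] \<in> S"
    proof
      assume "x \<in> (\<Union>s\<in>S. cylinder s)"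
      then obtain s where "s \<in> S" "x \<in> cylinder s" by blast
      then show "map x [0..<n] \<in> S" using map_eq_iff_cylinder[of x n s] by (simp add: S_def)
    qed force
    then show ?thesis using J_less by (auto simp: prod_emb_def PiE_iff S_def)
  qed
  then have set_eq: "prod_emb UNIV (\<lambda>_. count_space UNIV) J (Pi\<^sub>E J A) = (\<Union>s\<in>S. cylinder s)"
    by blast
  have disj: "disjoint_family_on cylinder S"
    unfolding disjoint_family_on_def S_def using cylinder_disjoint by auto
  have "emeasure P (\<Union>s\<in>S. cylinder s) = (\<Sum>s\<in>S. emeasure P (cylinder s))"
    by (rule sum_emeasure[symmetric]) (use sP disj \<open>finite S\<close> in \<open>simp_all add: image_subset_iff\<close>)
  also have "\<dots> = (\<Sum>s\<in>S. emeasure Q (cylinder s))" using eq by simp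
  also have "\<dots> = emeasure Q (\<Union>s\<in>S. cylinder s)"
    by (rule sum_emeasure) (use sQ disj \<open>finite S\<close> in \<open>simp_all add: image_subset_iff\<close>)
  finally show "emeasure P (prod_emb UNIV (\<lambda>_. count_space UNIV) J (Pi\<^sub>E J A)) =
      emeasure Q (prod_emb UNIV (\<lambda>_. count_space UNIV) J (Pi\<^sub>E J A))"
    unfolding set_eq .
qed (rule fin)

lemma invariant_probI_cylinder:
  assumes sets: "sets \<mu> = sets SigmaM" and prob: "prob_space \<mu>"
    and consistent: "\<And>s. emeasure \<mu> (cylinder s) =
        emeasure \<mu> (cylinder (False # s)) + emeasure \<mu> (cylinder (True # s))"
  shows "invariant_prob \<mu>"
proof -
  have meas: "shift \<in> measurable \<mu> \<mu>"
    using measurable_shift measurable_cong_sets[OF sets sets] by blast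
  have space: "space \<mu> = UNIV" using sets_eq_imp_space_eq[OF sets] by simp
  have "distr \<mu> \<mu> shift = \<mu>"
  proof (rule measure_eqI_cylinder)
    show "finite_measure (distr \<mu> \<mu> shift)"
      using prob_space.prob_space_distr[OF prob meas] prob_space.finite_measure by blast
    fix s
    have "shift -` cylinder s = cylinder (False # s) \<union> cylinder (True # s)"
      by (auto simp: mem_cylinder_Cons)
    then have "emeasure (distr \<mu> \<mu> shift) (cylinder s) =
        emeasure \<mu> (cylinder (False # s) \<union> cylinder (True # s))"
      using emeasure_distr[OF meas] sets space by simp
    also have "\<dots> = emeasure \<mu> (cylinder (False # s)) + emeasure \<mu> (cylinder (True # s))"
      using sets by (intro plus_emeasure[symmetric]) (auto simp: mem_cylinder_Cons)
    also have "\<dots> = emeasure \<mu> (cylinder s)"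
      by (rule consistent[symmetric])
    finally show "emeasure (distr \<mu> \<mu> shift) (cylinder s) = emeasure \<mu> (cylinder s)" .
  next
    show "sets (distr \<mu> \<mu> shift) = sets SigmaM" using sets by simp
  qed (rule sets)
  then show ?thesis
    unfolding invariant_prob_def using sets prob meas by blast
qed

subsection \<open>Measures with prescribed cylinder weights\<close>

text \<open>Such a measure is obtained as the image of Lebesgue measure on [0,1) under the map reading
  off the nested intervals: each word s is assigned the interval of length \<nu> s starting at
  interval_start \<nu> s, and the two one-letter extensions of s split it into a left and right part.\<close>

definition interval_start :: "(bool list \<Rightarrow> real) \<Rightarrow> bool list \<Rightarrow> real" where
  "interval_start \<nu> s = (\<Sum>i<length s. if s ! i then \<nu> (take i s @ [False]) else 0)"

lemma interval_start_Nil [simp]: "interval_start \<nu> [] = 0"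
  unfolding interval_start_def by simp

lemma interval_start_snoc:
  "interval_start \<nu> (s @ [b]) = interval_start \<nu> s + (if b then \<nu> (s @ [False]) else 0)"
proof -
  have "(\<Sum>i<length s. if (s @ [b]) ! i then \<nu> (take i (s @ [b]) @ [False]) else 0) =
      interval_start \<nu> s"
    unfolding interval_start_def by (intro sum.cong) (auto simp: nth_append)
  then show ?thesis
    unfolding interval_start_def[of _ "s @ [b]"] by (simp add: nth_append)
qed

fun interval_address :: "(bool list \<Rightarrow> real) \<Rightarrow> real \<Rightarrow> nat \<Rightarrow> bool list" where
  "interval_address \<nu> t 0 = []"
| "interval_address \<nu> t (Suc n) = (let s = interval_address \<nu> t n in
     s @ [interval_start \<nu> s + \<nu> (s @ [False]) \<le> t])"

lemma length_interval_address [simp]: "length (interval_address \<nu> t n) = n"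
  by (induction n) (auto simp: Let_def)

lemma interval_address_nth: "i < n \<Longrightarrow> interval_address \<nu> t n ! i = interval_address \<nu> t (Suc i) ! i"
proof (induction n)
  case (Suc n)
  then show ?case by (cases "i = n") (auto simp: nth_append Let_def)
qed simp

definition address_seq :: "(bool list \<Rightarrow> real) \<Rightarrow> real \<Rightarrow> seq" where
  "address_seq \<nu> t i = interval_address \<nu> t (Suc i) ! i"

lemma interval_address_eq_map: "interval_address \<nu> t n = map (address_seq \<nu> t) [0..<n]"
  by (rule nth_equalityI) (auto simp: address_seq_def interval_address_nth)

locale cylinder_weights =
  fixes \<nu> :: "bool list \<Rightarrow> real"
  assumes weight_nonneg: "\<And>s. 0 \<le> \<nu> s"
    and weight_Nil: "\<nu> [] = 1"
    and weight_split: "\<And>s. \<nu> s = \<nu> (s @ [False]) + \<nu> (s @ [True])"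
begin

definition interval :: "bool list \<Rightarrow> real set" where
  "interval s = {interval_start \<nu> s..<interval_start \<nu> s + \<nu> s}"

lemma interval_subset: "interval s \<subseteq> {0..<1}"
proof -
  have "0 \<le> interval_start \<nu> s \<and> interval_start \<nu> s + \<nu> s \<le> 1"
  proof (induction s rule: rev_induct)
    case (snoc b s)
    then show ?case
      using weight_split[of s] weight_nonneg[of "s @ [False]"] weight_nonneg[of "s @ [True]"]
      by (cases b) (auto simp: interval_start_snoc)
  qed (simp add: weight_Nil)
  then show ?thesis unfolding interval_def by auto
qed

lemma interval_snoc_iff:
  "t \<in> interval (s @ [b]) \<longleftrightarrow> t \<in> interval s \<and> (interval_start \<nu> s + \<nu> (s @ [False]) \<le> t) = b"
  using weight_split[of s] weight_nonneg[of "s @ [False]"] weight_nonneg[of "s @ [True]"]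
  unfolding interval_def by (cases b) (auto simp: interval_start_snoc)

lemma mem_interval_address_iff:
  assumes "t \<in> {0..<1}"
  shows "interval_address \<nu> t (length s) = s \<longleftrightarrow> t \<in> interval s"
proof (induction s rule: rev_induct)
  case Nil
  then show ?case using assms by (simp add: weight_Nil interval_def)
next
  case (snoc b s)
  have "interval_address \<nu> t (length (s @ [b])) = s @ [b] \<longleftrightarrow>
      interval_address \<nu> t (length s) = s \<and> (interval_start \<nu> s + \<nu> (s @ [False]) \<le> t) = b"
    by (auto simp: Let_def)
  then show ?case using snoc.IH interval_snoc_iff by auto
qed

definition unit_interval :: "real measure" where
  "unit_interval = restrict_space lborel {0..<1}"

lemma measurable_interval_address:
  "(\<lambda>t. interval_address \<nu> t n) \<in> measurable unit_interval (count_space UNIV)"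
proof (subst measurable_count_space_eq_countable)
  have "(\<lambda>t. interval_address \<nu> t n) -` {s} \<inter> {0..<1} = (if length s = n then interval s else {})"
    for s
    using mem_interval_address_iff[of _ s] interval_subset[of s] by auto
  then show "(\<lambda>t. interval_address \<nu> t n) \<in> space unit_interval \<rightarrow> UNIV \<and>
      (\<forall>s\<in>UNIV. (\<lambda>t. interval_address \<nu> t n) -` {s} \<inter> space unit_interval \<in> sets unit_interval)"
    using interval_subset by (simp add: unit_interval_def sets_restrict_space_iff interval_def)
qed simp

lemma measurable_address_seq: "address_seq \<nu> \<in> measurable unit_interval SigmaM"
proof -
  have "(\<lambda>t i. address_seq \<nu> t i) \<in> measurable unit_interval (Pi\<^sub>M UNIV (\<lambda>_. count_space UNIV))"
  proof (rule measurable_PiM_single')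
    fix i
    show "(\<lambda>t. address_seq \<nu> t i) \<in> measurable unit_interval (count_space UNIV)"
      unfolding address_seq_def
      by (rule measurable_compose[OF measurable_interval_address measurable_count_space])
  qed simp
  then show ?thesis unfolding SigmaM_def by simp
qed

definition weight_measure :: "seq measure" where
  "weight_measure = distr unit_interval SigmaM (address_seq \<nu>)"

lemma emeasure_weight_measure_cylinder: "emeasure weight_measure (cylinder s) = \<nu> s"
proof -
  have "t \<in> {0..<1} \<Longrightarrow> address_seq \<nu> t \<in> cylinder s \<longleftrightarrow> t \<in> interval s" for t
    using mem_interval_address_iff[of t s] map_eq_iff_cylinder
    by (simp add: interval_address_eq_map)
  then have "address_seq \<nu> -` cylinder s \<inter> space unit_interval = interval s"
    using interval_subset[of s] by (auto simp: unit_interval_def)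
  then have "emeasure weight_measure (cylinder s) = emeasure unit_interval (interval s)"
    unfolding weight_measure_def by (simp add: emeasure_distr measurable_address_seq)
  also have "\<dots> = emeasure lborel (interval s)"
    unfolding unit_interval_def using interval_subset by (intro emeasure_restrict_space) auto
  also have "\<dots> = \<nu> s"
    using weight_nonneg[of s] by (simp add: interval_def)
  finally show ?thesis .
qed

lemma prob_space_weight_measure: "prob_space weight_measure"
proof -
  have "prob_space unit_interval"
    by (rule prob_spaceI) (simp add: unit_interval_def emeasure_restrict_space)
  then show ?thesis
    unfolding weight_measure_def by (rule prob_space.prob_space_distr[OF _ measurable_address_seq])
qed

lemma sets_weight_measure [simp]: "sets weight_measure = sets SigmaM"
  unfolding weight_measure_def by simp

end

subsection \<open>An invariant measure seen by a single orbit\<close>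

definition visit_freq :: "seq \<Rightarrow> nat \<Rightarrow> bool list \<Rightarrow> real" where
  "visit_freq w N s = (\<Sum>j\<le>N. indicator (cylinder s) ((shift ^^ j) w)) / real (Suc N)"

lemma visit_freq_bounds: "0 \<le> visit_freq w N s \<and> visit_freq w N s \<le> 1"
proof -
  have "(\<Sum>j\<le>N. indicator (cylinder s) ((shift ^^ j) w)) \<le> (\<Sum>j\<le>N. 1 :: real)"
    by (intro sum_mono) (simp add: indicator_def)
  then show ?thesis
    unfolding visit_freq_def by (simp add: sum_nonneg divide_le_eq_1)
qed

lemma visit_freq_Nil: "visit_freq w N [] = 1"
  unfolding visit_freq_def cylinder_def by simp

lemma visit_freq_snoc_split:
  "visit_freq w N s = visit_freq w N (s @ [False]) + visit_freq w N (s @ [True])"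
proof -
  have "indicator (cylinder s) x =
      indicator (cylinder (s @ [False])) x + (indicator (cylinder (s @ [True])) x :: real)" for x
    by (cases "x (length s)") (auto simp: indicator_def mem_cylinder_snoc)
  then show ?thesis
    unfolding visit_freq_def by (simp add: sum.distrib add_divide_distrib)
qed

lemma visit_freq_Cons_split:
  "\<bar>visit_freq w N s - (visit_freq w N (False # s) + visit_freq w N (True # s))\<bar> \<le> 1 / real (Suc N)"
proof -
  define g where "g j = (indicator (cylinder s) ((shift ^^ j) w) :: real)" for j
  have "indicator (cylinder (False # s)) x + (indicator (cylinder (True # s)) x :: real) =
      indicator (cylinder s) (shift x)" for x
    by (cases "x 0") (auto simp: indicator_def mem_cylinder_Cons)
  then have Cons: "visit_freq w N (False # s) + visit_freq w N (True # s) =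
      (\<Sum>j\<le>N. g (Suc j)) / real (Suc N)"
    unfolding visit_freq_def g_def by (simp add: add_divide_distrib[symmetric] sum.distrib[symmetric])
  \<comment> \<open>the two sums telescope: they count the visits of w and of shift w\<close>
  have "(\<Sum>j\<le>N. g (Suc j)) - (\<Sum>j\<le>N. g j) = g (Suc N) - g 0"
    by (induction N) auto
  moreover have "\<bar>g (Suc N) - g 0\<bar> \<le> 1"
    unfolding g_def by (simp add: indicator_def)
  moreover have "visit_freq w N s = (\<Sum>j\<le>N. g j) / real (Suc N)"
    unfolding visit_freq_def g_def ..
  ultimately have "\<bar>visit_freq w N s - (visit_freq w N (False # s) + visit_freq w N (True # s))\<bar> =
      \<bar>g (Suc N) - g 0\<bar> / real (Suc N)"
    unfolding Cons by (simp add: abs_minus_commute flip: diff_divide_distrib)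
  also have "\<dots> \<le> 1 / real (Suc N)"
    using \<open>\<bar>g (Suc N) - g 0\<bar> \<le> 1\<close> by (simp add: divide_right_mono)
  finally show ?thesis .
qed

lemma visit_freq_avoided:
  assumes "\<And>j. J \<le> j \<Longrightarrow> (shift ^^ j) w \<notin> cylinder s"
  shows "visit_freq w N s \<le> real J / real (Suc N)"
proof -
  have "(\<Sum>j\<le>N. indicator (cylinder s) ((shift ^^ j) w)) \<le> (\<Sum>j\<le>N. if j < J then 1 else 0 :: real)"
    using assms by (intro sum_mono) (auto simp: indicator_def not_less)
  also have "\<dots> = real (card ({..N} \<inter> {..<J}))"
    by (simp add: sum.If_cases Int_def)
  also have "\<dots> \<le> real J"
    using card_mono[of "{..<J}" "{..N} \<inter> {..<J}"] by simp
  finally show ?thesis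
    unfolding visit_freq_def by (simp add: divide_right_mono)
qed

text \<open>The weights are a limit point of the visit frequencies; shift invariance holds in the limit
  because the frequency of s and the total frequency of its two extensions to the left differ
  by at most 1/(N+1).\<close>

lemma orbit_cylinder_weights:
  obtains \<nu> where "cylinder_weights \<nu>" "\<And>s. \<nu> s = \<nu> (False # s) + \<nu> (True # s)"
    "\<And>s. (\<forall>\<^sub>F j in sequentially. (shift ^^ j) w \<notin> cylinder s) \<Longrightarrow> \<nu> s = 0"
proof -
  define E where "E N k = visit_freq w N (from_nat k)" for N k
  have "\<bar>E N k\<bar> \<le> 1" for N k
    using visit_freq_bounds unfolding E_def by (simp add: abs_le_iff)
  then obtain r l where r: "strict_mono r" and l: "\<And>k. (\<lambda>N. E (r N) k) \<longlonglongrightarrow> l k"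
    using bounded_double_seq_diagonal[of E 1] by blast
  define \<nu> where "\<nu> s = l (to_nat s)" for s :: "bool list"
  have lim: "(\<lambda>N. visit_freq w (r N) s) \<longlonglongrightarrow> \<nu> s" for s
    using l[of "to_nat s"] unfolding E_def \<nu>_def by simp
  have inv_lim: "(\<lambda>N. 1 / real (Suc (r N))) \<longlonglongrightarrow> 0"
    using LIMSEQ_subseq_LIMSEQ[OF LIMSEQ_Suc[OF lim_const_over_n[of 1]] r] by (simp add: o_def)
  have nonneg: "0 \<le> \<nu> s" for s
    by (rule LIMSEQ_le_const[OF lim]) (use visit_freq_bounds in auto)
  have "cylinder_weights \<nu>"
  proof
    show "\<nu> [] = 1"
      using lim[of "[]"] by (simp add: visit_freq_Nil LIMSEQ_const_iff)
    show "\<nu> s = \<nu> (s @ [False]) + \<nu> (s @ [True])" for s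
    proof -
      have "(\<lambda>N. visit_freq w (r N) s) \<longlonglongrightarrow> \<nu> (s @ [False]) + \<nu> (s @ [True])"
        using tendsto_add[OF lim[of "s @ [False]"] lim[of "s @ [True]"]]
        by (simp flip: visit_freq_snoc_split)
      then show ?thesis using LIMSEQ_unique[OF lim] by blast
    qed
  qed (rule nonneg)
  moreover have "\<nu> s = \<nu> (False # s) + \<nu> (True # s)" for s
  proof -
    let ?d = "\<lambda>N. visit_freq w (r N) s - (visit_freq w (r N) (False # s) + visit_freq w (r N) (True # s))"
    have "?d \<longlonglongrightarrow> \<nu> s - (\<nu> (False # s) + \<nu> (True # s))"
      by (intro tendsto_diff tendsto_add lim)
    moreover have "?d \<longlonglongrightarrow> 0"
    proof (rule tendsto_sandwich)
      show "\<forall>\<^sub>F N in sequentially. - (1 / real (Suc (r N))) \<le> ?d N"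
        "\<forall>\<^sub>F N in sequentially. ?d N \<le> 1 / real (Suc (r N))"
        using abs_le_D1[OF visit_freq_Cons_split] abs_le_D2[OF visit_freq_Cons_split]
        by (auto intro!: always_eventually simp: algebra_simps)
      show "(\<lambda>N. - (1 / real (Suc (r N)))) \<longlonglongrightarrow> 0"
        using tendsto_minus[OF inv_lim] by simp
    qed (rule inv_lim)
    ultimately have "\<nu> s - (\<nu> (False # s) + \<nu> (True # s)) = 0"
      by (rule LIMSEQ_unique)
    then show ?thesis by simp
  qed
  moreover have "\<nu> s = 0" if avoided: "\<forall>\<^sub>F j in sequentially. (shift ^^ j) w \<notin> cylinder s" for s
  proof -
    obtain J where J: "\<And>j. J \<le> j \<Longrightarrow> (shift ^^ j) w \<notin> cylinder s"
      using avoided unfolding eventually_sequentially by blast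
    have "(\<lambda>N. real J / real (Suc (r N))) \<longlonglongrightarrow> 0"
      using tendsto_mult_right_zero[OF inv_lim, of "real J"] by simp
    moreover have "\<exists>N0. \<forall>N\<ge>N0. visit_freq w (r N) s \<le> real J / real (Suc (r N))"
      using visit_freq_avoided[OF J] by blast
    ultimately have "\<nu> s \<le> 0"
      by (intro LIMSEQ_le[OF lim])
    then show ?thesis using nonneg[of s] by simp
  qed
  ultimately show thesis by (rule that)
qed

lemma orbit_invariant_measure:
  obtains \<mu> where "invariant_prob \<mu>"
    "\<And>s. (\<forall>\<^sub>F j in sequentially. (shift ^^ j) w \<notin> cylinder s) \<Longrightarrow> emeasure \<mu> (cylinder s) = 0"
proof -
  obtain \<nu> where \<nu>: "cylinder_weights \<nu>" and shift_consistent: "\<And>s. \<nu> s = \<nu> (False # s) + \<nu> (True # s)"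
    and avoided: "\<And>s. (\<forall>\<^sub>F j in sequentially. (shift ^^ j) w \<notin> cylinder s) \<Longrightarrow> \<nu> s = 0"
    using orbit_cylinder_weights by blast
  interpret cylinder_weights \<nu> by (rule \<nu>)
  have "invariant_prob weight_measure"
    by (intro invariant_probI_cylinder prob_space_weight_measure sets_weight_measure)
      (simp add: emeasure_weight_measure_cylinder weight_nonneg flip: ennreal_plus shift_consistent)
  then show thesis
    using that avoided by (simp add: emeasure_weight_measure_cylinder)
qed

locale orbit_limit_measure =
  fixes w :: seq and \<mu> :: "seq measure"
  assumes sets_eq: "sets \<mu> = sets SigmaM"
    and avoided_null:
      "\<And>s. (\<forall>\<^sub>F j in sequentially. (shift ^^ j) w \<notin> cylinder s) \<Longrightarrow> emeasure \<mu> (cylinder s) = 0"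
begin

lemma avoided_cylinders_null_sets:
  assumes "finite S" "\<And>s. s \<in> S \<Longrightarrow> \<forall>\<^sub>F j in sequentially. (shift ^^ j) w \<notin> cylinder s"
  shows "(\<Union>s\<in>S. cylinder s) \<in> null_sets \<mu>"
proof (rule null_sets_UN')
  show "countable S" using assms(1) by (rule countable_finite)
  show "cylinder s \<in> null_sets \<mu>" if "s \<in> S" for s
    using avoided_null[OF assms(2)[OF that]] sets_eq by (simp add: null_sets_def)
qed

lemma emeasure_eq_0_if_orbit_stays_away:
  assumes "finite C" and away: "\<forall>\<^sub>F j in sequentially. \<forall>q\<in>C. \<not> agree_upto k ((shift ^^ j) w) q"
  shows "emeasure \<mu> C = 0"
proof -
  let ?S = "(\<lambda>q. map q [0..<k]) ` C"
  have null: "(\<Union>s\<in>?S. cylinder s) \<in> null_sets \<mu>"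
  proof (rule avoided_cylinders_null_sets)
    show "finite ?S" using \<open>finite C\<close> by simp
    fix s assume "s \<in> ?S"
    then obtain q where "q \<in> C" "s = map q [0..<k]" by blast
    then have agree: "x \<in> cylinder s \<Longrightarrow> agree_upto k x q" for x
      using map_eq_iff_cylinder[of x k s] by (simp add: agree_upto_def map_eq_conv)
    show "\<forall>\<^sub>F j in sequentially. (shift ^^ j) w \<notin> cylinder s"
      using away by (rule eventually_mono) (use \<open>q \<in> C\<close> agree in blast)
  qed
  have "C \<subseteq> (\<Union>s\<in>?S. cylinder s)"
    using mem_cylinder_map by blast
  then have "emeasure \<mu> C \<le> emeasure \<mu> (\<Union>s\<in>?S. cylinder s)"
    by (rule emeasure_mono) (use null in \<open>simp add: null_sets_def\<close>)
  with null show ?thesis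
    by (simp add: null_sets_def)
qed

text \<open>If the orbit tends to the zero set of a continuous R, the set where R exceeds 1/(k+1) is
  covered by finitely many cylinders on which R exceeds 1/(2(k+1)); these are eventually
  avoided, hence null.\<close>

lemma AE_eq_0_if_orbit_tends_to_0:
  assumes R: "cyl_continuous R" and nonneg: "\<And>x. 0 \<le> R x"
    and lim: "(\<lambda>j. R ((shift ^^ j) w)) \<longlonglongrightarrow> 0"
  shows "AE x in \<mu>. R x = 0"
proof -
  have "\<exists>m. \<forall>x y. agree_upto m x y \<longrightarrow> \<bar>R x - R y\<bar> < inverse (real (Suc k)) / 2" for k
  proof -
    have "0 < inverse (real (Suc k)) / 2" by simp
    from cyl_continuous_uniform[OF R this]
    obtain m where "\<And>x y. agree_upto m x y \<Longrightarrow> \<bar>R x - R y\<bar> < inverse (real (Suc k)) / 2"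
      by blast
    then show ?thesis by blast
  qed
  then have "\<forall>k. \<exists>m. \<forall>x y. agree_upto m x y \<longrightarrow> \<bar>R x - R y\<bar> < inverse (real (Suc k)) / 2"
    by blast
  then obtain m where "\<forall>k. \<forall>x y. agree_upto (m k) x y \<longrightarrow> \<bar>R x - R y\<bar> < inverse (real (Suc k)) / 2"
    by (rule choice[THEN exE])
  then have m: "\<And>k x y. agree_upto (m k) x y \<Longrightarrow> \<bar>R x - R y\<bar> < inverse (real (Suc k)) / 2"
    by blast
  define S where "S k = {s. length s = m k \<and> (\<exists>y\<in>cylinder s. inverse (real (Suc k)) \<le> R y)}" for k
  have null: "(\<Union>k. \<Union>s\<in>S k. cylinder s) \<in> null_sets \<mu>"
  proof (intro null_sets_UN avoided_cylinders_null_sets)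
    show "finite (S k)" for k
      using finite_bool_lists_length[of "m k"] unfolding S_def by (rule rev_finite_subset) blast
    fix k s assume "s \<in> S k"
    then obtain y where y: "y \<in> cylinder s" "inverse (real (Suc k)) \<le> R y" and "length s = m k"
      unfolding S_def by blast
    have "\<forall>\<^sub>F j in sequentially. \<bar>R ((shift ^^ j) w)\<bar> < inverse (real (Suc k)) / 2"
      using tendstoD[OF lim, of "inverse (real (Suc k)) / 2"] by simp
    moreover have "(shift ^^ j) w \<notin> cylinder s" if "\<bar>R ((shift ^^ j) w)\<bar> < inverse (real (Suc k)) / 2" for j
    proof
      assume "(shift ^^ j) w \<in> cylinder s"
      then have "agree_upto (m k) y ((shift ^^ j) w)"
        using y(1) \<open>length s = m k\<close> unfolding cylinder_def agree_upto_def by simp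
      then show False using m that y(2) by fastforce
    qed
    ultimately show "\<forall>\<^sub>F j in sequentially. (shift ^^ j) w \<notin> cylinder s"
      by (auto elim: eventually_mono)
  qed
  show ?thesis
  proof (rule AE_I'[OF null], safe)
    fix x assume "R x \<noteq> 0"
    then obtain k where k: "inverse (real (Suc k)) < R x"
      using nonneg[of x] reals_Archimedean by (metis order_neq_le_trans)
    then have "map x [0..<m k] \<in> S k"
      unfolding S_def by (auto intro!: bexI[of _ x])
    then show "x \<in> (\<Union>k. \<Union>s\<in>S k. cylinder s)"
      using mem_cylinder_map by blast
  qed
qed

end

lemma integrable_cyl_continuous:
  assumes "sets \<mu> = sets SigmaM" "finite_measure \<mu>" "cyl_continuous f"
  shows "integrable \<mu> f"
proof -
  obtain B where "\<And>x. \<bar>f x\<bar> \<le> B" using cyl_continuous_bounded[OF assms(3)] by blast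
  moreover have "f \<in> borel_measurable \<mu>"
    using cyl_continuous_borel_measurable[OF assms(3)] measurable_cong_sets[OF assms(1) refl] by blast
  ultimately show ?thesis
    by (intro finite_measure.integrable_const_bound[OF assms(2), where B=B]) auto
qed

lemma integral_comp_shift:
  assumes inv: "invariant_prob \<mu>" and f: "cyl_continuous f"
  shows "(\<integral>x. f (shift x) \<partial>\<mu>) = integral\<^sup>L \<mu> f"
proof -
  have sets: "sets \<mu> = sets SigmaM" and shift: "shift \<in> measurable \<mu> \<mu>"
    and distr: "distr \<mu> \<mu> shift = \<mu>"
    using inv unfolding invariant_prob_def by auto
  have "f \<in> borel_measurable \<mu>"
    using cyl_continuous_borel_measurable[OF f] measurable_cong_sets[OF sets refl] by blast
  then show ?thesis
    using integral_distr[OF shift] distr by metis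
qed

text \<open>The dual potential is cohomologous to -R*, so a measure on which R* vanishes almost everywhere
  integrates the dual potential to 0 = m(A*).\<close>

lemma maximizing_if_R_star_AE_eq_0:
  assumes inv: "invariant_prob \<mu>" and Vs: "cyl_continuous Vs" and As: "cyl_continuous As"
    and AE: "AE x in \<mu>. R_star Vs As x = 0" and m: "mval As = 0"
  shows "maximizing As \<mu>"
proof -
  have sets: "sets \<mu> = sets SigmaM" and fin: "finite_measure \<mu>"
    using inv unfolding invariant_prob_def by (auto intro: prob_space.finite_measure)
  have R: "cyl_continuous (R_star Vs As)" by (rule cyl_continuous_R_star[OF Vs As])
  note integrable = integrable_cyl_continuous[OF sets fin]
  have "integral\<^sup>L \<mu> As = (\<integral>x. Vs (shift x) - Vs x - R_star Vs As x \<partial>\<mu>)"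
    unfolding R_star_def by simp
  also have "\<dots> = (\<integral>x. Vs (shift x) \<partial>\<mu>) - integral\<^sup>L \<mu> Vs - integral\<^sup>L \<mu> (R_star Vs As)"
    using integrable[OF Vs] integrable[OF R] integrable[OF cyl_continuous_comp_shift[OF Vs]]
    by simp
  also have "integral\<^sup>L \<mu> (R_star Vs As) = 0"
    using integral_cong_AE[of "R_star Vs As" \<mu> "\<lambda>_. 0"] AE
      cyl_continuous_borel_measurable[OF R] measurable_cong_sets[OF sets refl] by auto
  finally have "integral\<^sup>L \<mu> As = 0"
    using integral_comp_shift[OF inv Vs] by simp
  then show ?thesis
    unfolding maximizing_def using inv m by simp
qed

subsection \<open>Periodic orbits and their entrances\<close>

lemma funpow_shift_commute: "(shift ^^ a) ((shift ^^ b) x) = (shift ^^ b) ((shift ^^ a) x)"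
  by (metis funpow_add add.commute comp_apply)

lemma periodic_apply_mod:
  assumes "(shift ^^ n) q = q" "0 < n"
  shows "q i = q (i mod n)"
proof (induction i rule: less_induct)
  case (less i)
  show ?case
  proof (cases "i < n")
    case False
    then have "q i = (shift ^^ n) q (i - n)" by (simp add: funpow_shift_apply)
    also have "\<dots> = q ((i - n) mod n)" using assms less False by simp
    finally show ?thesis using False by (simp add: le_mod_geq)
  qed simp
qed

locale shift_cycle =
  fixes M :: "seq set" and p :: seq and n :: nat
  assumes period_pos: "0 < n" and periodic: "(shift ^^ n) p = p"
    and cycle_eq: "M = {(shift ^^ i) p | i. i < n}"
begin

lemma periodic_cycle: "q \<in> M \<Longrightarrow> (shift ^^ n) q = q"
  using cycle_eq periodic funpow_shift_commute by auto

lemma cycle_eqI: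
  assumes "q \<in> M" "q' \<in> M" "agree_upto n q q'"
  shows "q = q'"
proof
  fix i
  have "q (i mod n) = q' (i mod n)"
    using assms(3) period_pos unfolding agree_upto_def by simp
  then show "q i = q' i"
    using periodic_apply_mod[OF periodic_cycle period_pos] assms(1,2) by metis
qed

lemma cycle_shift_closed: "q \<in> M \<Longrightarrow> shift q \<in> M"
proof -
  assume "q \<in> M"
  then obtain i where i: "i < n" "q = (shift ^^ i) p" using cycle_eq by auto
  have "shift q = (shift ^^ Suc i) p" using i by simp
  show "shift q \<in> M"
  proof (cases "Suc i = n")
    case True
    then have "shift q = (shift ^^ 0) p" using \<open>shift q = _\<close> periodic by simp
    then show ?thesis using cycle_eq period_pos by blast
  next
    case False
    then have "Suc i < n" using i by simp
    then show ?thesis using \<open>shift q = _\<close> cycle_eq by blast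
  qed
qed

lemma cycle_shift_inj: "q \<in> M \<Longrightarrow> q' \<in> M \<Longrightarrow> shift q = shift q' \<Longrightarrow> q = q'"
proof -
  assume q: "q \<in> M" "q' \<in> M" and eq: "shift q = shift q'"
  have n: "n = Suc (n - 1)" using period_pos by simp
  have "(shift ^^ n) x = (shift ^^ (n - 1)) (shift x)" for x
    by (subst n) (simp only: funpow_Suc_right comp_apply)
  then have "(shift ^^ n) q = (shift ^^ n) q'" using eq by simp
  then show "q = q'"
    using periodic_cycle[OF q(1)] periodic_cycle[OF q(2)] by simp
qed

lemma cycle_has_preimage: "q \<in> M \<Longrightarrow> \<exists>q'\<in>M. shift q' = q"
proof -
  assume "q \<in> M"
  have n: "n = Suc (n - 1)" using period_pos by simp
  have "shift ((shift ^^ (n - 1)) q) = (shift ^^ n) q"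
    by (subst (2) n) simp
  then have "shift ((shift ^^ (n - 1)) q) = q"
    using periodic_cycle[OF \<open>q \<in> M\<close>] by simp
  moreover have "(shift ^^ m) q \<in> M" for m
    using \<open>q \<in> M\<close> cycle_shift_closed by (induction m) auto
  ultimately show ?thesis by blast
qed

lemma finite_cycle: "finite M"
proof -
  have "M = (\<lambda>i. (shift ^^ i) p) ` {..<n}" using cycle_eq by auto
  then show ?thesis by simp
qed

definition entrances :: "seq set" where
  "entrances = {z. z \<notin> M \<and> shift z \<in> M}"

lemma finite_entrances: "finite entrances"
proof -
  have "z \<in> (\<lambda>(b, q). tau (\<lambda>_. b) q) ` (UNIV \<times> M)" if "z \<in> entrances" for z
  proof (rule image_eqI)
    show "z = (\<lambda>(b, q). tau (\<lambda>_. b) q) (z 0, shift z)" by (simp add: tau_head_shift)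
    show "(z 0, shift z) \<in> UNIV \<times> M" using that by (simp add: entrances_def)
  qed
  then have "entrances \<subseteq> (\<lambda>(b, q). tau (\<lambda>_. b) q) ` (UNIV \<times> M)" by blast
  then show ?thesis using finite_cycle by (auto intro: finite_subset)
qed

definition near_cycle :: "nat \<Rightarrow> seq \<Rightarrow> bool" where
  "near_cycle k x \<longleftrightarrow> (\<exists>q\<in>M. agree_upto k x q)"

text \<open>An orbit moving from far to near the cycle passes close to an entrance: prepend the first
  letter of the point to the cycle point that its shift follows.\<close>

lemma entrance_nearby:
  assumes "\<not> near_cycle (Suc k) x" "near_cycle (Suc k) (shift x)"
  obtains z where "z \<in> entrances" "agree_upto (Suc k) z x"
proof -
  obtain q where q: "q \<in> M" "agree_upto (Suc k) (shift x) q"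
    using assms(2) unfolding near_cycle_def by blast
  define z where "z = tau (\<lambda>_. x 0) q"
  have agree: "agree_upto (Suc k) z x"
    using q(2) unfolding agree_upto_def z_def tau_def shift_def by (auto split: nat.splits)
  have "z \<notin> M"
  proof
    assume "z \<in> M"
    obtain q' where "q' \<in> M" "shift q' = q" using cycle_has_preimage[OF q(1)] by blast
    then have "z = q'" using cycle_shift_inj \<open>z \<in> M\<close> by (simp add: z_def)
    then show False
      using assms(1) \<open>q' \<in> M\<close> agree agree_upto_sym unfolding near_cycle_def by blast
  qed
  then have "z \<in> entrances" unfolding entrances_def using q(1) by (simp add: z_def)
  then show thesis using agree by (rule that)
qed

lemma entrance_lower_bound:
  assumes R: "cyl_continuous R" and pos: "\<And>z. z \<in> entrances \<Longrightarrow> 0 < R z"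
  obtains c k where "0 < c" "n \<le> k"
    "\<And>x. \<not> near_cycle (Suc k) x \<Longrightarrow> near_cycle (Suc k) (shift x) \<Longrightarrow> c \<le> R x"
proof -
  have "\<forall>z\<in>entrances. \<exists>m. \<forall>x. agree_upto m z x \<longrightarrow> \<bar>R x - R z\<bar> < R z / 2"
  proof
    fix z assume "z \<in> entrances"
    then have "0 < R z / 2" using pos by simp
    then show "\<exists>m. \<forall>x. agree_upto m z x \<longrightarrow> \<bar>R x - R z\<bar> < R z / 2"
      by (rule cyl_continuousD[OF R])
  qed
  then obtain m where m: "\<forall>z\<in>entrances. \<forall>x. agree_upto (m z) z x \<longrightarrow> \<bar>R x - R z\<bar> < R z / 2"
    by (rule bchoice[THEN exE])
  define k where "k = max n (Max (m ` entrances))"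
  define c where "c = Min (insert 1 ((\<lambda>z. R z / 2) ` entrances))"
  have "0 < c"
    unfolding c_def using finite_entrances pos by (subst Min_gr_iff) auto
  moreover have "n \<le> k"
    unfolding k_def by simp
  moreover have "c \<le> R x" if far: "\<not> near_cycle (Suc k) x" and near: "near_cycle (Suc k) (shift x)" for x
  proof -
    obtain z where z: "z \<in> entrances" "agree_upto (Suc k) z x"
      using entrance_nearby[OF far near] by blast
    have "m z \<le> Max (m ` entrances)"
      using finite_entrances z(1) by simp
    then have "agree_upto (m z) z x"
      using agree_upto_mono[OF z(2)] by (simp add: k_def)
    then have "\<bar>R x - R z\<bar> < R z / 2"
      using m z(1) by blast
    moreover have "c \<le> R z / 2"
      unfolding c_def using finite_entrances z(1) by (intro Min_le) auto
    ultimately show ?thesis by linarith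
  qed
  ultimately show thesis by (rule that)
qed

text \<open>Once the orbit shadows the cycle to precision at least the period, consecutive shadowing
  points are forced to follow the cycle, so the orbit is itself a cycle point.\<close>

lemma mem_cycle_if_always_near:
  assumes "n \<le> k" and near: "\<And>j. near_cycle (Suc k) ((shift ^^ j) w)"
  shows "w \<in> M"
proof -
  have "\<forall>j. \<exists>q. q \<in> M \<and> agree_upto (Suc k) ((shift ^^ j) w) q"
    using near unfolding near_cycle_def by blast
  then obtain q where "\<forall>j. q j \<in> M \<and> agree_upto (Suc k) ((shift ^^ j) w) (q j)"
    by (rule choice[THEN exE])
  then have q: "\<And>j. q j \<in> M" "\<And>j. agree_upto (Suc k) ((shift ^^ j) w) (q j)"
    by auto
  have q_Suc: "q (Suc j) = shift (q j)" for j
  proof (rule cycle_eqI)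
    have "agree_upto k (q (Suc j)) ((shift ^^ Suc j) w)"
      using agree_upto_mono[OF q(2)[of "Suc j"], of k] agree_upto_sym by simp
    moreover have "agree_upto k ((shift ^^ Suc j) w) (shift (q j))"
      using agree_upto_shift[OF q(2)[of j]] by simp
    ultimately have "agree_upto k (q (Suc j)) (shift (q j))"
      by (rule agree_upto_trans)
    then show "agree_upto n (q (Suc j)) (shift (q j))"
      using \<open>n \<le> k\<close> by (rule agree_upto_mono)
    show "q (Suc j) \<in> M" "shift (q j) \<in> M"
      using q(1) cycle_shift_closed by auto
  qed
  then have q_orbit: "q j = (shift ^^ j) (q 0)" for j
    by (induction j) auto
  have "w i = q 0 i" for i
  proof -
    have "(shift ^^ i) w 0 = q i 0"
      using q(2)[of i] unfolding agree_upto_def by blast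
    then show ?thesis
      using q_orbit[of i] by (simp add: funpow_shift_apply)
  qed
  then have "w = q 0" by (simp add: fun_eq_iff)
  then show ?thesis using q(1) by simp
qed

lemma orbit_enters_or_leaves_cycle:
  assumes R: "cyl_continuous R" and pos: "\<And>z. z \<in> entrances \<Longrightarrow> 0 < R z"
    and lim: "(\<lambda>j. R ((shift ^^ j) w)) \<longlonglongrightarrow> 0"
  shows "(\<exists>j. (shift ^^ j) w \<in> M) \<or> (\<exists>k. \<forall>\<^sub>F j in sequentially. \<not> near_cycle k ((shift ^^ j) w))"
proof -
  obtain c k where "0 < c" "n \<le> k"
    and entering: "\<And>x. \<not> near_cycle (Suc k) x \<Longrightarrow> near_cycle (Suc k) (shift x) \<Longrightarrow> c \<le> R x"
    using entrance_lower_bound[OF R pos] by blast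
  obtain J where J: "\<And>j. J \<le> j \<Longrightarrow> R ((shift ^^ j) w) < c"
    using LIMSEQ_D[OF lim \<open>0 < c\<close>] by (auto simp: abs_less_iff)
  let ?near = "\<lambda>j. near_cycle (Suc k) ((shift ^^ j) w)"
  have near_backward: "?near j" if "J \<le> j" "?near (j + d)" for j d
    using that
  proof (induction d arbitrary: j)
    case (Suc d)
    have "?near (Suc j)" using Suc.IH[of "Suc j"] Suc.prems by simp
    then show ?case using entering[of "(shift ^^ j) w"] J[OF Suc.prems(1)] by fastforce
  qed simp
  show ?thesis
  proof (cases "\<forall>\<^sub>F j in sequentially. \<not> ?near j")
    case False
    then have frequently: "\<exists>j'\<ge>j. ?near j'" for j
      unfolding eventually_sequentially by auto
    have "?near (J + j)" for j
    proof -
      obtain j' where "J + j \<le> j'" "?near j'" using frequently by blast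
      then show ?thesis using near_backward[of "J + j" "j' - (J + j)"] by simp
    qed
    then have "near_cycle (Suc k) ((shift ^^ j) ((shift ^^ J) w))" for j
      by (simp add: funpow_add add.commute)
    then have "(shift ^^ J) w \<in> M"
      using mem_cycle_if_always_near[OF \<open>n \<le> k\<close>] by blast
    then show ?thesis by blast
  qed blast
qed

lemma orbit_reaches_cycle:
  assumes cal: "calibrated_subaction As Vs" and Vs: "cyl_continuous Vs" and As: "cyl_continuous As"
    and mAs: "mval As = 0" and supp: "\<And>\<mu>. maximizing As \<mu> \<Longrightarrow> emeasure \<mu> M = 1"
    and good: "\<And>z. z \<in> entrances \<Longrightarrow> 0 < R_star Vs As z"
    and lim: "(\<lambda>j. R_star Vs As ((shift ^^ j) w)) \<longlonglongrightarrow> 0"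
  shows "\<exists>j. (shift ^^ j) w \<in> M"
proof -
  have R: "cyl_continuous (R_star Vs As)" by (rule cyl_continuous_R_star[OF Vs As])
  have "\<not> (\<forall>\<^sub>F j in sequentially. \<not> near_cycle k ((shift ^^ j) w))" for k
  proof
    assume away: "\<forall>\<^sub>F j in sequentially. \<not> near_cycle k ((shift ^^ j) w)"
    obtain \<mu> where inv: "invariant_prob \<mu>"
      and avoided: "\<And>s. (\<forall>\<^sub>F j in sequentially. (shift ^^ j) w \<notin> cylinder s) \<Longrightarrow> emeasure \<mu> (cylinder s) = 0"
      using orbit_invariant_measure by blast
    interpret orbit_limit_measure w \<mu>
      using inv avoided by unfold_locales (simp_all add: invariant_prob_def)
    have "emeasure \<mu> M = 0"
      using emeasure_eq_0_if_orbit_stays_away[OF finite_cycle] away by (simp add: near_cycle_def)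
    moreover have "maximizing As \<mu>"
      using AE_eq_0_if_orbit_tends_to_0[OF R R_star_nonneg[OF cal] lim]
      by (rule maximizing_if_R_star_AE_eq_0[OF inv Vs As _ mAs])
    ultimately show False using supp by simp
  qed
  then show ?thesis using orbit_enters_or_leaves_cycle[OF R good lim] by blast
qed

end

theorem mainTheorem6:
  fixes A As V Vs :: "seq \<Rightarrow> real" and W :: "seq \<Rightarrow> seq \<Rightarrow> real"
    and M :: "seq set" and x wx :: seq
  assumes A_holder: "holder A"
    and W_cont: "cont_seq2 W"
    and kernel: "\<And>w y. As w = A (tau w y) + W (shift w) (tau w y) - W w y"
    and mA: "mval A = 0" and mAs: "mval As = 0"
    and V_cal: "calibrated_subaction A V" and V_cont: "cont_seq V"
    and Vs_cal: "calibrated_subaction As Vs" and Vs_cont: "cont_seq Vs"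
    and V_sup: "\<And>y. ereal (V y) = (SUP w. ereal (W w y - Vs w) - I_star Vs As w)"
    and unique_max: "\<exists>!\<mu>. maximizing As \<mu>"
    and M_orbit: "periodic_orbit M"
    and M_supp: "\<And>\<mu>. maximizing As \<mu> \<Longrightarrow> emeasure \<mu> M = 1"
    and good: "\<And>w. w \<notin> M \<Longrightarrow> shift w \<in> M \<Longrightarrow> R_star Vs As w > 0"
    and opt: "optimal_pair V Vs As W x wx"
  shows "(\<exists>k. (shift ^^ k) wx \<in> M) \<and>
         (\<forall>k. (shift ^^ k) wx \<in> M \<longrightarrow>
              optimal_pair V Vs As W (fst ((hatTinv ^^ k) (x, wx))) (snd ((hatTinv ^^ k) (x, wx))))"
proof
  show "\<forall>k. (shift ^^ k) wx \<in> M \<longrightarrow>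
      optimal_pair V Vs As W (fst ((hatTinv ^^ k) (x, wx))) (snd ((hatTinv ^^ k) (x, wx)))"
    using optimal_pair_hatTinv_funpow[OF Vs_cal V_cal kernel V_sup opt] by blast
  obtain p n where "0 < n" "(shift ^^ n) p = p" "M = {(shift ^^ i) p | i. i < n}"
    using M_orbit unfolding periodic_orbit_def by blast
  then interpret shift_cycle M p n
    by unfold_locales
  show "\<exists>k. (shift ^^ k) wx \<in> M"
  proof (rule orbit_reaches_cycle[OF Vs_cal _ _ mAs M_supp])
    show "cyl_continuous Vs" by (rule cont_seq_imp_cyl_continuous[OF Vs_cont])
    show "cyl_continuous As" by (rule cyl_continuous_dual_potential[OF W_cont kernel])
    show "0 < R_star Vs As z" if "z \<in> entrances" for z
      using good that by (simp add: entrances_def)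
    show "(\<lambda>j. R_star Vs As ((shift ^^ j) wx)) \<longlonglongrightarrow> 0"
      using R_star_orbit_sums[OF Vs_cal optimal_pair_I_star[OF opt]]
      by (simp add: sums_summable summable_LIMSEQ_zero)
  qed
qed

end
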